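(* Let $n\ge 4$ and let $W_n^\sigma=(W_n,\sigma)$ be a signed wheel with central vertex $v_0$. Then $W_n^\sigma$ is distance compatible if and only if it contains no negative $4$-cycle (cycle of length $4$ whose product of edge signs is $-1$) having $v_0$ as one of its vertices.
   Context: The wheel $W_n$ is the join of the cycle $C_n$ with a single vertex $v_0$ (the central vertex); the vertices of $C_n$ are the rim vertices. A signed graph $\Sigma=(G,\sigma)$ consists of a finite simple connected graph $G=(V,E)$ and a signature $\sigma:E\to\{+1,-1\}$; the sign of a path or cycle is the product of its edge signs. For vertices $u,v$, $d(u,v)$ denotes the usual distance in $G$. Set $\sigma_{\max}(uv)=-1$ if every shortest $u$–$v$ path has sign $-1$, and $\sigma_{\max}(uv)=+1$ otherwise; set $\sigma_{\min}(uv)=+1$ if every shortest $u$–$v$ path has sign $+1$, and $\sigma_{\min}(uv)=-1$ otherwise. $\Sigma$ is (distance) compatible if $\sigma_{\max}(uv)d(u,v)=\sigma_{\min}(uv)d(u,v)$ for all vertices $u,v$. *)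

theory Defs
  imports Main
begin

text \<open>Simple graphs are given by a vertex set V and a set E of 2-element edges {u,v}.
A signature is a function on edges with values +1/-1.\<close>

definition walk :: "'a set set \<Rightarrow> 'a list \<Rightarrow> bool" where
  "walk E xs \<longleftrightarrow> xs \<noteq> [] \<and> (\<forall>(a,b) \<in> set (zip xs (tl xs)). {a,b} \<in> E)"

definition walk_edges :: "'a list \<Rightarrow> 'a set list" where
  "walk_edges xs = map (\<lambda>(a,b). {a,b}) (zip xs (tl xs))"

definition path_sign :: "('a set \<Rightarrow> int) \<Rightarrow> 'a list \<Rightarrow> int" where
  "path_sign \<sigma> xs = prod_list (map \<sigma> (walk_edges xs))"

definition gdist :: "'a set set \<Rightarrow> 'a \<Rightarrow> 'a \<Rightarrow> nat" where
  "gdist E u v = (LEAST k. \<exists>xs. walk E xs \<and> hd xs = u \<and> last xs = v \<and> length xs = Suc k)"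

definition shortest_path :: "'a set set \<Rightarrow> 'a \<Rightarrow> 'a \<Rightarrow> 'a list \<Rightarrow> bool" where
  "shortest_path E u v xs \<longleftrightarrow> walk E xs \<and> distinct xs \<and> hd xs = u \<and> last xs = v
      \<and> length xs = Suc (gdist E u v)"

definition sigma_max :: "'a set set \<Rightarrow> ('a set \<Rightarrow> int) \<Rightarrow> 'a \<Rightarrow> 'a \<Rightarrow> int" where
  "sigma_max E \<sigma> u v =
     (if \<forall>p. shortest_path E u v p \<longrightarrow> path_sign \<sigma> p = -1 then -1 else 1)"

definition sigma_min :: "'a set set \<Rightarrow> ('a set \<Rightarrow> int) \<Rightarrow> 'a \<Rightarrow> 'a \<Rightarrow> int" where
  "sigma_min E \<sigma> u v =
     (if \<forall>p. shortest_path E u v p \<longrightarrow> path_sign \<sigma> p = 1 then 1 else -1)"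

definition dist_compatible :: "'a set \<Rightarrow> 'a set set \<Rightarrow> ('a set \<Rightarrow> int) \<Rightarrow> bool" where
  "dist_compatible V E \<sigma> \<longleftrightarrow>
     (\<forall>u\<in>V. \<forall>v\<in>V. sigma_max E \<sigma> u v * int (gdist E u v) = sigma_min E \<sigma> u v * int (gdist E u v))"

definition has_neg_4cycle_through :: "'a set set \<Rightarrow> ('a set \<Rightarrow> int) \<Rightarrow> 'a \<Rightarrow> bool" where
  "has_neg_4cycle_through E \<sigma> w \<longleftrightarrow>
     (\<exists>a b c d. distinct [a,b,c,d] \<and> {a,b} \<in> E \<and> {b,c} \<in> E \<and> {c,d} \<in> E \<and> {d,a} \<in> E
        \<and> w \<in> {a,b,c,d} \<and> \<sigma> {a,b} * \<sigma> {b,c} * \<sigma> {c,d} * \<sigma> {d,a} = -1)"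

text \<open>The wheel W_n: central vertex 0, rim cycle 1 - 2 - ... - n - 1.\<close>
definition wheel_vertices :: "nat \<Rightarrow> nat set" where
  "wheel_vertices n = {0..n}"

definition wheel_edges :: "nat \<Rightarrow> nat set set" where
  "wheel_edges n = {{0, i} | i. i \<in> {1..n}} \<union> {{i, i mod n + 1} | i. i \<in> {1..n}}"

end

theory Submission
  imports Defs
begin

text \<open>The centre of the wheel is adjacent to every other vertex, so any two non-adjacent
vertices are at distance 2 and their shortest paths are exactly the paths u - w - v through
a common neighbour w. Compatibility thus says that all such paths have the sign of u - 0 - v,
i.e. that no 4-cycle u w v 0 with u, v non-adjacent is negative. For n \<ge> 4 the two rim
vertices opposite the centre on a 4-cycle through it are never adjacent, so these are all
4-cycles through the centre.\<close>

lemma walk_singleton: "walk E [u]"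
  by (simp add: walk_def)

lemma walk_two: "walk E [u, v] \<longleftrightarrow> {u, v} \<in> E"
  by (simp add: walk_def)

lemma walk_three: "walk E [u, w, v] \<longleftrightarrow> {u, w} \<in> E \<and> {w, v} \<in> E"
  by (simp add: walk_def)

lemma path_sign_two: "path_sign \<sigma> [u, v] = \<sigma> {u, v}"
  by (simp add: path_sign_def walk_edges_def)

lemma path_sign_three: "path_sign \<sigma> [u, w, v] = \<sigma> {u, w} * \<sigma> {w, v}"
  by (simp add: path_sign_def walk_edges_def)

lemma prod_list_sign: "set xs \<subseteq> {1, -1 :: int} \<Longrightarrow> prod_list xs \<in> {1, -1}"
  by (induction xs) auto

lemma path_sign_walk:
  assumes "walk E xs" "\<forall>e\<in>E. \<sigma> e \<in> {1, -1}"
  shows "path_sign \<sigma> xs \<in> {1, -1}"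
proof -
  have "set (walk_edges xs) \<subseteq> E"
    using assms(1) by (auto simp: walk_def walk_edges_def)
  then show ?thesis
    unfolding path_sign_def using assms(2) by (intro prod_list_sign) auto
qed

lemma gdist_le:
  "walk E xs \<Longrightarrow> hd xs = u \<Longrightarrow> last xs = v \<Longrightarrow> length xs = Suc k \<Longrightarrow> gdist E u v \<le> k"
  unfolding gdist_def by (rule Least_le) blast

lemma gdist_witness:
  assumes "walk E xs" "hd xs = u" "last xs = v"
  obtains ys where "walk E ys" "hd ys = u" "last ys = v" "length ys = Suc (gdist E u v)"
proof -
  have "length xs = Suc (length xs - 1)"
    using assms(1) by (simp add: walk_def)
  then have "\<exists>k xs. walk E xs \<and> hd xs = u \<and> last xs = v \<and> length xs = Suc k"
    using assms by blast
  then have "\<exists>ys. walk E ys \<and> hd ys = u \<and> last ys = v \<and> length ys = Suc (gdist E u v)"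
    unfolding gdist_def by (rule LeastI_ex)
  then show ?thesis
    using that by blast
qed

lemma gdist_pos:
  assumes "walk E xs" "hd xs = u" "last xs = v" "u \<noteq> v"
  shows "gdist E u v \<noteq> 0"
proof
  assume "gdist E u v = 0"
  moreover obtain ys where "hd ys = u" "last ys = v" "length ys = Suc (gdist E u v)"
    using gdist_witness[OF assms(1-3)] by blast
  ultimately show False
    using assms(4) by (auto simp: length_Suc_conv)
qed

lemma gdist_refl: "gdist E u u = 0"
  using gdist_le[of E "[u]"] by (simp add: walk_singleton)

lemma gdist_edge:
  assumes "{u, v} \<in> E" "u \<noteq> v"
  shows "gdist E u v = 1"
proof -
  have "gdist E u v \<le> 1"
    using gdist_le[of E "[u, v]"] assms by (simp add: walk_two)
  moreover have "gdist E u v \<noteq> 0"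
    using gdist_pos[of E "[u, v]"] assms by (simp add: walk_two)
  ultimately show ?thesis by simp
qed

lemma gdist_common_neighbour:
  assumes "u \<noteq> v" "{u, v} \<notin> E" "{u, w} \<in> E" "{w, v} \<in> E"
  shows "gdist E u v = 2"
proof -
  have "gdist E u v \<le> 2"
    using gdist_le[of E "[u, w, v]"] assms by (simp add: walk_three)
  moreover have "gdist E u v \<noteq> 0"
    using gdist_pos[of E "[u, w, v]"] assms by (simp add: walk_three)
  moreover have "gdist E u v \<noteq> 1"
  proof
    assume "gdist E u v = 1"
    moreover obtain ys where "walk E ys" "hd ys = u" "last ys = v" "length ys = Suc (gdist E u v)"
      using gdist_witness[of E "[u, w, v]" u v] assms(3,4) by (auto simp: walk_three)
    ultimately show False
      using assms(2) by (auto simp: length_Suc_conv walk_two)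
  qed
  ultimately show ?thesis by simp
qed

lemma shortest_path_edge_iff:
  assumes "{u, v} \<in> E" "u \<noteq> v"
  shows "shortest_path E u v p \<longleftrightarrow> p = [u, v]"
  using assms gdist_edge[OF assms]
  by (auto simp: shortest_path_def walk_two length_Suc_conv)

lemma shortest_path_gdist_2_iff:
  assumes "gdist E u v = 2"
  shows "shortest_path E u v p \<longleftrightarrow> (\<exists>w. p = [u, w, v] \<and> {u, w} \<in> E \<and> {w, v} \<in> E)"
proof -
  have "u \<noteq> v"
    using assms gdist_refl[of E u] by auto
  have "{u, v} \<notin> E"
    using assms gdist_edge[of u v E] \<open>u \<noteq> v\<close> by auto
  have "shortest_path E u v [u, w, v] \<longleftrightarrow> {u, w} \<in> E \<and> {w, v} \<in> E" for w
    using \<open>u \<noteq> v\<close> \<open>{u, v} \<notin> E\<close> assms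
    by (auto simp: shortest_path_def walk_three insert_commute)
  moreover have "\<exists>w. p = [u, w, v]" if p: "shortest_path E u v p"
  proof -
    have "length p = Suc (Suc (Suc 0))"
      using p assms by (simp add: shortest_path_def)
    then obtain a w c where "p = [a, w, c]"
      by (auto simp: length_Suc_conv)
    then show ?thesis
      using p by (auto simp: shortest_path_def)
  qed
  ultimately show ?thesis
    by blast
qed

lemma sigma_max_eq_sigma_min_iff:
  assumes "shortest_path E u v p\<^sub>0" "\<And>p. shortest_path E u v p \<Longrightarrow> path_sign \<sigma> p \<in> {1, -1}"
  shows "sigma_max E \<sigma> u v = sigma_min E \<sigma> u v \<longleftrightarrow>
           (\<forall>p. shortest_path E u v p \<longrightarrow> path_sign \<sigma> p = path_sign \<sigma> p\<^sub>0)"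
  using assms unfolding sigma_max_def sigma_min_def by (auto, force+)

lemma sigma_max_eq_sigma_min_edge:
  assumes "{u, v} \<in> E" "u \<noteq> v" "\<sigma> {u, v} \<in> {1, -1}"
  shows "sigma_max E \<sigma> u v = sigma_min E \<sigma> u v"
  using sigma_max_eq_sigma_min_iff[of E u v "[u, v]" \<sigma>] assms
  by (simp add: shortest_path_edge_iff path_sign_two)

lemma sigma_max_eq_sigma_min_gdist_2_iff:
  assumes sign: "\<forall>e\<in>E. \<sigma> e \<in> {1, -1}"
    and "gdist E u v = 2" "{u, z} \<in> E" "{z, v} \<in> E"
  shows "sigma_max E \<sigma> u v = sigma_min E \<sigma> u v \<longleftrightarrow>
           (\<forall>w. {u, w} \<in> E \<longrightarrow> {w, v} \<in> E \<longrightarrow> \<sigma> {u, w} * \<sigma> {w, v} = \<sigma> {u, z} * \<sigma> {z, v})"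
proof -
  have p\<^sub>0: "shortest_path E u v [u, z, v]"
    using assms by (simp add: shortest_path_gdist_2_iff)
  have "path_sign \<sigma> p \<in> {1, -1}" if "shortest_path E u v p" for p
    using that sign path_sign_walk by (auto simp: shortest_path_def)
  from sigma_max_eq_sigma_min_iff[OF p\<^sub>0 this] show ?thesis
    using assms(2) by (auto simp: shortest_path_gdist_2_iff path_sign_three)
qed

lemma apex_common_neighbour:
  assumes apex: "\<forall>v\<in>V. v \<noteq> z \<longrightarrow> {z, v} \<in> E"
    and "u \<in> V" "v \<in> V" "u \<noteq> v" "{u, v} \<notin> E"
  shows "u \<noteq> z" "v \<noteq> z" "{u, z} \<in> E" "{z, v} \<in> E"
proof -
  show "u \<noteq> z" "v \<noteq> z"
    using assms by (auto simp: insert_commute)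
  then show "{u, z} \<in> E" "{z, v} \<in> E"
    using assms by (auto simp: insert_commute)
qed

lemma dist_compatible_apex_iff_nonadjacent:
  assumes sign: "\<forall>e\<in>E. \<sigma> e \<in> {1, -1}"
    and apex: "\<forall>v\<in>V. v \<noteq> z \<longrightarrow> {z, v} \<in> E"
  shows "dist_compatible V E \<sigma> \<longleftrightarrow>
           (\<forall>u\<in>V. \<forall>v\<in>V. u \<noteq> v \<longrightarrow> {u, v} \<notin> E \<longrightarrow> sigma_max E \<sigma> u v = sigma_min E \<sigma> u v)"
proof -
  have "sigma_max E \<sigma> u v * int (gdist E u v) = sigma_min E \<sigma> u v * int (gdist E u v) \<longleftrightarrow>
          (u \<noteq> v \<longrightarrow> {u, v} \<notin> E \<longrightarrow> sigma_max E \<sigma> u v = sigma_min E \<sigma> u v)"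
    if "u \<in> V" "v \<in> V" for u v
  proof (cases "u = v")
    case True
    then show ?thesis
      by (simp add: gdist_refl)
  next
    case False
    show ?thesis
    proof (cases "{u, v} \<in> E")
      case True
      then show ?thesis
        using sign sigma_max_eq_sigma_min_edge[OF True False] by auto
    next
      case nonadjacent: False
      note z = apex_common_neighbour[OF apex that False nonadjacent]
      have "gdist E u v = 2"
        using gdist_common_neighbour[OF False nonadjacent z(3,4)] .
      then show ?thesis
        using False nonadjacent by simp
    qed
  qed
  then show ?thesis
    unfolding dist_compatible_def by blast
qed

theorem dist_compatible_apex_iff:
  assumes sign: "\<forall>e\<in>E. \<sigma> e \<in> {1, -1}"
    and edges: "\<forall>e\<in>E. e \<subseteq> V"
    and apex: "\<forall>v\<in>V. v \<noteq> z \<longrightarrow> {z, v} \<in> E"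
  shows "dist_compatible V E \<sigma> \<longleftrightarrow>
           \<not> (\<exists>u w v. distinct [u, w, v, z] \<and> {u, w} \<in> E \<and> {w, v} \<in> E \<and> {u, v} \<notin> E
                 \<and> \<sigma> {u, w} * \<sigma> {w, v} * \<sigma> {v, z} * \<sigma> {z, u} = -1)"
proof -
  have pair: "sigma_max E \<sigma> u v = sigma_min E \<sigma> u v \<longleftrightarrow>
      \<not> (\<exists>w. distinct [u, w, v, z] \<and> {u, w} \<in> E \<and> {w, v} \<in> E
             \<and> \<sigma> {u, w} * \<sigma> {w, v} * \<sigma> {v, z} * \<sigma> {z, u} = -1)"
    if uv: "u \<in> V" "v \<in> V" "u \<noteq> v" "{u, v} \<notin> E" for u v
  proof -
    note z = apex_common_neighbour[OF apex uv]
    have "\<sigma> {u, w} * \<sigma> {w, v} = \<sigma> {u, z} * \<sigma> {z, v} \<longleftrightarrow>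
            \<not> (distinct [u, w, v, z] \<and> \<sigma> {u, w} * \<sigma> {w, v} * \<sigma> {v, z} * \<sigma> {z, u} = -1)"
      if "{u, w} \<in> E" "{w, v} \<in> E" for w
    proof (cases "w = z")
      case False
      then have "distinct [u, w, v, z]"
        using that uv z by (auto simp: insert_commute)
      moreover have "\<sigma> {u, w} \<in> {1, -1}" "\<sigma> {w, v} \<in> {1, -1}" "\<sigma> {u, z} \<in> {1, -1}" "\<sigma> {z, v} \<in> {1, -1}"
        using that z sign by auto
      ultimately show ?thesis
        by (auto simp: insert_commute)
    qed simp
    then show ?thesis
      using sigma_max_eq_sigma_min_gdist_2_iff[OF sign gdist_common_neighbour z(3,4)] uv z by blast
  qed
  show ?thesis
    unfolding dist_compatible_apex_iff_nonadjacent[OF sign apex]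
  proof (intro iffI notI)
    assume "\<exists>u w v. distinct [u, w, v, z] \<and> {u, w} \<in> E \<and> {w, v} \<in> E \<and> {u, v} \<notin> E
              \<and> \<sigma> {u, w} * \<sigma> {w, v} * \<sigma> {v, z} * \<sigma> {z, u} = -1"
      and "\<forall>u\<in>V. \<forall>v\<in>V. u \<noteq> v \<longrightarrow> {u, v} \<notin> E \<longrightarrow> sigma_max E \<sigma> u v = sigma_min E \<sigma> u v"
    then show False
      using pair edges by (metis distinct_length_2_or_more insert_subset)
  qed (use pair in blast)
qed

lemma has_neg_4cycle_through_iff:
  "has_neg_4cycle_through E \<sigma> z \<longleftrightarrow>
     (\<exists>u w v. distinct [u, w, v, z] \<and> {u, w} \<in> E \<and> {w, v} \<in> E \<and> {v, z} \<in> E \<and> {z, u} \<in> E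
        \<and> \<sigma> {u, w} * \<sigma> {w, v} * \<sigma> {v, z} * \<sigma> {z, u} = -1)"
  (is "_ \<longleftrightarrow> (\<exists>u w v. ?cycle u w v)")
proof
  assume "has_neg_4cycle_through E \<sigma> z"
  then obtain a b c d where abcd: "distinct [a, b, c, d]"
    "{a, b} \<in> E" "{b, c} \<in> E" "{c, d} \<in> E" "{d, a} \<in> E" "z \<in> {a, b, c, d}"
    "\<sigma> {a, b} * \<sigma> {b, c} * \<sigma> {c, d} * \<sigma> {d, a} = -1"
    unfolding has_neg_4cycle_through_def by blast
  from abcd(6) have "?cycle b c d \<or> ?cycle c d a \<or> ?cycle d a b \<or> ?cycle a b c"
    using abcd by (auto simp: mult_ac)
  then show "\<exists>u w v. ?cycle u w v"
    by blast
next
  assume "\<exists>u w v. ?cycle u w v"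
  then show "has_neg_4cycle_through E \<sigma> z"
    unfolding has_neg_4cycle_through_def by blast
qed

definition rim_succ :: "nat \<Rightarrow> nat \<Rightarrow> nat" where
  "rim_succ n i = (if i = n then 1 else i + 1)"

lemma wheel_edges_rim_succ:
  "wheel_edges n = {{0, i} | i. i \<in> {1..n}} \<union> {{i, rim_succ n i} | i. i \<in> {1..n}}"
proof -
  have "i mod n + 1 = rim_succ n i" if "i \<in> {1..n}" for i
    using that by (auto simp: rim_succ_def)
  then show ?thesis
    unfolding wheel_edges_def by force
qed

lemma wheel_edges_subset: "e \<in> wheel_edges n \<Longrightarrow> e \<subseteq> wheel_vertices n"
  by (auto simp: wheel_edges_rim_succ wheel_vertices_def rim_succ_def)

lemma wheel_centre_adjacent: "v \<in> wheel_vertices n \<Longrightarrow> v \<noteq> 0 \<Longrightarrow> {0, v} \<in> wheel_edges n"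
  by (auto simp: wheel_edges_def wheel_vertices_def)

lemma wheel_rim_edge_iff:
  assumes "x \<noteq> 0" "y \<noteq> 0"
  shows "{x, y} \<in> wheel_edges n \<longleftrightarrow>
           x \<in> {1..n} \<and> y = rim_succ n x \<or> y \<in> {1..n} \<and> x = rim_succ n y"
proof
  assume "{x, y} \<in> wheel_edges n"
  then obtain i where "i \<in> {1..n}" "{x, y} = {i, rim_succ n i}"
    using assms unfolding wheel_edges_rim_succ by (auto simp: doubleton_eq_iff)
  then show "x \<in> {1..n} \<and> y = rim_succ n x \<or> y \<in> {1..n} \<and> x = rim_succ n y"
    by (auto simp: doubleton_eq_iff)
next
  assume "x \<in> {1..n} \<and> y = rim_succ n x \<or> y \<in> {1..n} \<and> x = rim_succ n y"
  then show "{x, y} \<in> wheel_edges n"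
    unfolding wheel_edges_rim_succ by (auto simp: insert_commute)
qed

lemma wheel_no_chord:
  assumes "n \<ge> 4" "distinct [b, c, d, 0]" "{b, c} \<in> wheel_edges n" "{c, d} \<in> wheel_edges n"
  shows "{b, d} \<notin> wheel_edges n"
  using assms by (auto simp: wheel_rim_edge_iff rim_succ_def split: if_splits)

theorem theorem3p2:
  fixes n :: nat and \<sigma> :: "nat set \<Rightarrow> int"
  assumes "n \<ge> 4"
    and "\<forall>e \<in> wheel_edges n. \<sigma> e = 1 \<or> \<sigma> e = -1"
  shows "dist_compatible (wheel_vertices n) (wheel_edges n) \<sigma> \<longleftrightarrow>
           \<not> has_neg_4cycle_through (wheel_edges n) \<sigma> 0"
proof -
  let ?V = "wheel_vertices n" and ?E = "wheel_edges n"
  have sign: "\<forall>e\<in>?E. \<sigma> e \<in> {1, -1}"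
    using assms(2) by auto
  have apex: "\<forall>v\<in>?V. v \<noteq> 0 \<longrightarrow> {0, v} \<in> ?E"
    using wheel_centre_adjacent by blast
  have spokes: "{v, 0} \<in> ?E" "{0, u} \<in> ?E" if "{u, w} \<in> ?E" "{w, v} \<in> ?E" "u \<noteq> 0" "v \<noteq> 0" for u w v
  proof -
    have "u \<in> ?V" "v \<in> ?V"
      using wheel_edges_subset[OF that(1)] wheel_edges_subset[OF that(2)] by auto
    then show "{v, 0} \<in> ?E" "{0, u} \<in> ?E"
      using apex that(3,4) by (auto simp: insert_commute[of v 0])
  qed
  have "dist_compatible ?V ?E \<sigma> \<longleftrightarrow>
      \<not> (\<exists>u w v. distinct [u, w, v, 0] \<and> {u, w} \<in> ?E \<and> {w, v} \<in> ?E \<and> {u, v} \<notin> ?E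
            \<and> \<sigma> {u, w} * \<sigma> {w, v} * \<sigma> {v, 0} * \<sigma> {0, u} = -1)"
    using dist_compatible_apex_iff[OF sign _ apex] wheel_edges_subset by blast
  also have "\<dots> \<longleftrightarrow> \<not> has_neg_4cycle_through ?E \<sigma> 0"
    unfolding has_neg_4cycle_through_iff using wheel_no_chord[OF assms(1)] spokes
    by (metis distinct_length_2_or_more)
  finally show ?thesis .
qed

end
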